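(* Let $a,b$ be Laurent polynomials with symmetry types $\mathrm{S}a(z)=\epsilon_az^{c_a}$ and $\mathrm{S}b(z)=\epsilon_bz^{c_b}$ ($\epsilon_a,\epsilon_b\in\{\pm1\}$, $c_a,c_b\in\mathbb Z$). Suppose $b\neq0$ and $\mathrm{len}(a)>\mathrm{len}(b)$. Then there exists a Laurent polynomial $q_1$ with symmetry such that $a_1(z):=a(z)-b(z)q_1(z)$ satisfies $\mathrm{len}(a_1)<\mathrm{len}(a)$ and $\mathrm{S}a_1(z)=\mathrm{S}a(z)=\mathrm{S}b(z)\,\mathrm{S}q_1(z)$.
   Context: Laurent polynomial $u(z)=\sum_ku(k)z^k$ with finitely many nonzero complex coefficients. $u$ has symmetry of type $\epsilon z^c$ if $u(z)=\epsilon z^cu(z^{-1})$; for nonzero $u$, $\mathrm{S}u(z):=u(z)/u(z^{-1})$; the zero polynomial has symmetry of every type. For nonzero $u$, $\mathrm{len}(u):=\max\{k:u(k)\ne0\}-\min\{k:u(k)\neq0\}$, and $\mathrm{len}(0):=-\infty$. *)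

theory Defs
  imports Complex_Main "HOL-Library.Extended_Real"
begin

text \<open>A Laurent polynomial u(z) = sum_k u(k) z^k is represented by its coefficient
function u :: int => complex, required to have finite support.\<close>

definition laurent_poly :: "(int \<Rightarrow> complex) \<Rightarrow> bool" where
  "laurent_poly u \<longleftrightarrow> finite {k. u k \<noteq> 0}"

text \<open>u has symmetry of type eps z^c iff u(z) = eps z^c u(z^{-1});
comparing coefficients of z^k this says u(k) = eps u(c - k) for all k.
The zero polynomial has symmetry of every type.  For nonzero u this is
exactly the statement S u(z) = u(z)/u(z^{-1}) = eps z^c.\<close>

definition has_symmetry :: "complex \<Rightarrow> int \<Rightarrow> (int \<Rightarrow> complex) \<Rightarrow> bool" where
  "has_symmetry \<epsilon> c u \<longleftrightarrow> (\<forall>k. u k = \<epsilon> * u (c - k))"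

definition lmult :: "(int \<Rightarrow> complex) \<Rightarrow> (int \<Rightarrow> complex) \<Rightarrow> (int \<Rightarrow> complex)" where
  "lmult u v = (\<lambda>k. \<Sum>j\<in>{j. u j \<noteq> 0}. u j * v (k - j))"

definition len :: "(int \<Rightarrow> complex) \<Rightarrow> ereal" where
  "len u = (if u = (\<lambda>_. 0) then -\<infinity>
            else ereal (real_of_int (Max {k. u k \<noteq> 0} - Min {k. u k \<noteq> 0})))"

end

theory Submission
  imports Defs
begin

(* Symmetry of type eps z^c forces the extreme exponents of a nonzero u to satisfy
   lmax u + lmin u = c.  With d = lmax a - lmax b and alpha = a(lmax a) / b(lmax b), the
   quotient q1 = alpha z^d + eps_a eps_b alpha z^(c_a - c_b - d) has symmetry of type
   eps_a eps_b z^(c_a - c_b), so a - b q1 has the symmetry type of a.  Since len b < len a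
   the second exponent is below d, hence the top coefficient of a - b q1 cancels, and by
   symmetry so does the bottom one: the length drops. *)

definition lmonom :: "complex \<Rightarrow> int \<Rightarrow> int \<Rightarrow> complex" where
  "lmonom c d = (\<lambda>k. if k = d then c else 0)"

definition lmax :: "(int \<Rightarrow> complex) \<Rightarrow> int" where
  "lmax u = Max {k. u k \<noteq> 0}"

definition lmin :: "(int \<Rightarrow> complex) \<Rightarrow> int" where
  "lmin u = Min {k. u k \<noteq> 0}"

lemma has_symmetry_support_iff:
  assumes "has_symmetry \<epsilon> c u" "\<epsilon> \<noteq> 0"
  shows "u (c - k) \<noteq> 0 \<longleftrightarrow> u k \<noteq> 0"
  using assms unfolding has_symmetry_def by (metis diff_diff_cancel mult_eq_0_iff)

lemma has_symmetry_diff: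
  assumes "has_symmetry \<epsilon> c u" "has_symmetry \<epsilon> c v"
  shows "has_symmetry \<epsilon> c (\<lambda>k. u k - v k)"
  unfolding has_symmetry_def
proof
  fix k
  have "u k - v k = \<epsilon> * u (c - k) - \<epsilon> * v (c - k)"
    using assms unfolding has_symmetry_def by (intro arg_cong2[where f = minus]) blast+
  then show "u k - v k = \<epsilon> * (u (c - k) - v (c - k))"
    by (simp only: right_diff_distrib)
qed

lemma has_symmetry_lmult:
  assumes u: "has_symmetry \<epsilon>1 c1 u" and v: "has_symmetry \<epsilon>2 c2 v" and "\<epsilon>1 \<noteq> 0"
  shows "has_symmetry (\<epsilon>1 * \<epsilon>2) (c1 + c2) (lmult u v)"
  unfolding has_symmetry_def
proof
  fix k
  let ?S = "{j. u j \<noteq> 0}"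
  have "lmult u v k = (\<Sum>i\<in>?S. u (c1 - i) * v (k - (c1 - i)))"
    unfolding lmult_def
    by (rule sum.reindex_bij_witness[of _ "\<lambda>i. c1 - i" "\<lambda>i. c1 - i"])
       (auto simp: has_symmetry_support_iff[OF u \<open>\<epsilon>1 \<noteq> 0\<close>])
  also have "\<dots> = (\<Sum>i\<in>?S. \<epsilon>1 * \<epsilon>2 * (u i * v (c1 + c2 - k - i)))"
  proof (rule sum.cong)
    fix i
    have "u (c1 - i) = \<epsilon>1 * u (c1 - (c1 - i))"
      using u unfolding has_symmetry_def by blast
    moreover have "v (k - (c1 - i)) = \<epsilon>2 * v (c2 - (k - (c1 - i)))"
      using v unfolding has_symmetry_def by blast
    moreover have "c2 - (k - (c1 - i)) = c1 + c2 - k - i"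
      by simp
    ultimately show "u (c1 - i) * v (k - (c1 - i)) = \<epsilon>1 * \<epsilon>2 * (u i * v (c1 + c2 - k - i))"
      by simp
  qed simp
  also have "\<dots> = \<epsilon>1 * \<epsilon>2 * lmult u v (c1 + c2 - k)"
    unfolding lmult_def by (simp add: sum_distrib_left)
  finally show "lmult u v k = \<epsilon>1 * \<epsilon>2 * lmult u v (c1 + c2 - k)" .
qed

lemma has_symmetry_lmonom_pair:
  assumes "\<epsilon> * \<epsilon> = 1"
  shows "has_symmetry \<epsilon> c (\<lambda>k. lmonom \<alpha> d k + lmonom (\<epsilon> * \<alpha>) (c - d) k)"
  using assms unfolding has_symmetry_def lmonom_def
  by (auto simp: algebra_simps)

lemma laurent_poly_lmonom_pair: "laurent_poly (\<lambda>k. lmonom \<alpha> d k + lmonom \<beta> e k)"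
  unfolding laurent_poly_def lmonom_def by (rule finite_subset[of _ "{d, e}"]) auto

lemma lmult_add_right: "lmult u (\<lambda>k. v k + w k) k = lmult u v k + lmult u w k"
  unfolding lmult_def by (simp add: distrib_left sum.distrib)

lemma lmult_lmonom_right:
  assumes "laurent_poly u"
  shows "lmult u (lmonom \<alpha> d) k = \<alpha> * u (k - d)"
proof -
  have "lmult u (lmonom \<alpha> d) k = (\<Sum>j\<in>{j. u j \<noteq> 0}. if j = k - d then \<alpha> * u j else 0)"
    unfolding lmult_def lmonom_def by (intro sum.cong) auto
  then show ?thesis
    using assms unfolding laurent_poly_def by (simp add: sum.delta')
qed

lemma
  assumes "laurent_poly u" "u \<noteq> (\<lambda>_. 0)"
  shows lmax_coeff_nonzero: "u (lmax u) \<noteq> 0"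
    and lmin_coeff_nonzero: "u (lmin u) \<noteq> 0"
  using assms Max_in[of "{k. u k \<noteq> 0}"] Min_in[of "{k. u k \<noteq> 0}"]
  unfolding laurent_poly_def lmax_def lmin_def by auto

lemma
  assumes "laurent_poly u" "u k \<noteq> 0"
  shows lmin_le_coeff_index: "lmin u \<le> k"
    and coeff_index_le_lmax: "k \<le> lmax u"
  using assms unfolding laurent_poly_def lmax_def lmin_def by auto

lemma
  assumes "laurent_poly u"
  shows coeff_eq_0_above_lmax: "lmax u < k \<Longrightarrow> u k = 0"
    and coeff_eq_0_below_lmin: "k < lmin u \<Longrightarrow> u k = 0"
  using assms coeff_index_le_lmax lmin_le_coeff_index not_le by blast+

lemma len_eq_lmax_minus_lmin:
  "u \<noteq> (\<lambda>_. 0) \<Longrightarrow> len u = ereal (real_of_int (lmax u - lmin u))"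
  unfolding len_def lmax_def lmin_def by simp

lemma len_less_if_support_between:
  assumes "\<And>k. u k \<noteq> 0 \<Longrightarrow> m < k \<and> k < M"
  shows "len u < ereal (real_of_int (M - m))"
proof (cases "u = (\<lambda>_. 0)")
  case False
  have "{k. u k \<noteq> 0} \<subseteq> {m..M}"
  proof
    fix k
    assume "k \<in> {k. u k \<noteq> 0}"
    then have "m < k \<and> k < M"
      using assms by blast
    then show "k \<in> {m..M}"
      by simp
  qed
  then have "laurent_poly u"
    unfolding laurent_poly_def by (rule finite_subset) simp
  then have "m < lmin u" "lmax u < M"
    using assms[OF lmin_coeff_nonzero[of u]] assms[OF lmax_coeff_nonzero[of u]] False by blast+
  then show ?thesis using False by (simp add: len_eq_lmax_minus_lmin)
qed (simp add: len_def)

lemma lmax_plus_lmin_if_has_symmetry: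
  assumes "laurent_poly u" "u \<noteq> (\<lambda>_. 0)" "has_symmetry \<epsilon> c u" "\<epsilon> \<noteq> 0"
  shows "lmax u + lmin u = c"
proof -
  have "u (c - lmin u) \<noteq> 0" "u (c - lmax u) \<noteq> 0"
    using has_symmetry_support_iff[OF assms(3,4)] lmax_coeff_nonzero[OF assms(1,2)]
      lmin_coeff_nonzero[OF assms(1,2)] by blast+
  then have "c - lmin u \<le> lmax u" "lmin u \<le> c - lmax u"
    using coeff_eq_0_above_lmax coeff_eq_0_below_lmin assms(1) by (meson not_le)+
  then show ?thesis by linarith
qed

lemma has_symmetry_remainder:
  assumes "has_symmetry \<epsilon>a ca a" "has_symmetry \<epsilon>b cb b" "has_symmetry (\<epsilon>a * \<epsilon>b) (ca - cb) q"
    and "\<epsilon>b * \<epsilon>b = 1"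
  shows "has_symmetry \<epsilon>a ca (\<lambda>k. a k - lmult b q k)"
proof -
  have \<epsilon>_product: "\<epsilon>b * (\<epsilon>a * \<epsilon>b) = \<epsilon>a" and "\<epsilon>b \<noteq> 0"
    using assms(4) by (metis mult.commute mult.left_commute mult_1_right, auto)
  have "has_symmetry \<epsilon>a ca (lmult b q)"
    using has_symmetry_lmult[OF assms(2,3) \<open>\<epsilon>b \<noteq> 0\<close>] unfolding \<epsilon>_product by simp
  then show ?thesis
    by (rule has_symmetry_diff[OF assms(1)])
qed

lemma lmonom_pair_nonzero:
  assumes "\<alpha> \<noteq> 0" "d \<noteq> e"
  shows "(\<lambda>k. lmonom \<alpha> d k + lmonom \<beta> e k) \<noteq> (\<lambda>_. 0)"
proof
  assume "(\<lambda>k. lmonom \<alpha> d k + lmonom \<beta> e k) = (\<lambda>_. 0)"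
  then have "lmonom \<alpha> d d + lmonom \<beta> e d = 0"
    by (rule fun_cong)
  with assms show False
    unfolding lmonom_def by simp
qed

lemma lmult_lmonom_pair_cancels_top:
  assumes "laurent_poly a" "laurent_poly b" "b \<noteq> (\<lambda>_. 0)"
    and "e < lmax a - lmax b" "lmax a \<le> k"
  shows "a k - lmult b (\<lambda>j. lmonom (a (lmax a) / b (lmax b)) (lmax a - lmax b) j
                          + lmonom \<beta> e j) k = 0"
proof -
  have "b (k - e) = 0"
    using assms(2,4,5) coeff_eq_0_above_lmax by simp
  moreover have "a k = a (lmax a) / b (lmax b) * b (k - (lmax a - lmax b))"
  proof (cases "k = lmax a")
    case True
    then show ?thesis using lmax_coeff_nonzero[OF assms(2,3)] by simp
  next
    case False
    then have "a k = 0" "b (k - (lmax a - lmax b)) = 0"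
      using assms(5) coeff_eq_0_above_lmax[OF assms(1)] coeff_eq_0_above_lmax[OF assms(2)]
      by simp_all
    then show ?thesis by simp
  qed
  ultimately show ?thesis
    using assms(2) by (simp add: lmult_add_right lmult_lmonom_right)
qed

lemma len_less_if_has_symmetry_vanishes_above:
  assumes "has_symmetry \<epsilon> c v" "\<And>k. M \<le> k \<Longrightarrow> v k = 0"
  shows "len v < ereal (real_of_int (2 * M - c))"
proof -
  have "c - M < k \<and> k < M" if "v k \<noteq> 0" for k
  proof -
    have "v k = \<epsilon> * v (c - k)"
      using assms(1) unfolding has_symmetry_def by blast
    then have "v (c - k) \<noteq> 0"
      using that by auto
    then have "c - k < M" "k < M"
      using assms(2) that not_le by blast+
    then show ?thesis
      by linarith
  qed
  then have "len v < ereal (real_of_int (M - (c - M)))"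
    by (rule len_less_if_support_between)
  then show ?thesis
    by simp
qed

theorem lemma3p5:
  fixes a b :: "int \<Rightarrow> complex" and \<epsilon>a \<epsilon>b :: complex and ca cb :: int
  assumes "laurent_poly a" and "laurent_poly b"
    and "\<epsilon>a \<in> {1, -1}" and "\<epsilon>b \<in> {1, -1}"
    and "has_symmetry \<epsilon>a ca a" and "has_symmetry \<epsilon>b cb b"
    and "b \<noteq> (\<lambda>_. 0)"
    and "len a > len b"
  shows "\<exists>q1. laurent_poly q1 \<and> q1 \<noteq> (\<lambda>_. 0) \<and>
           has_symmetry (\<epsilon>a * \<epsilon>b) (ca - cb) q1 \<and>
           (let a1 = (\<lambda>k. a k - lmult b q1 k)
            in len a1 < len a \<and> has_symmetry \<epsilon>a ca a1)"
proof -
  have "\<epsilon>a \<noteq> 0" "\<epsilon>b \<noteq> 0" "\<epsilon>b * \<epsilon>b = 1" "(\<epsilon>a * \<epsilon>b) * (\<epsilon>a * \<epsilon>b) = 1"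
    using assms(3,4) by auto
  have a_nonzero: "a \<noteq> (\<lambda>_. 0)"
    using assms(8) by (auto simp: len_def)
  define d where "d = lmax a - lmax b"
  define \<alpha> where "\<alpha> = a (lmax a) / b (lmax b)"
  define q1 where "q1 = (\<lambda>k. lmonom \<alpha> d k + lmonom (\<epsilon>a * \<epsilon>b * \<alpha>) (ca - cb - d) k)"
  have centre_a: "lmax a + lmin a = ca" and "lmax b + lmin b = cb"
    using lmax_plus_lmin_if_has_symmetry assms(1,2,5,6,7) a_nonzero \<open>\<epsilon>a \<noteq> 0\<close> \<open>\<epsilon>b \<noteq> 0\<close>
    by blast+
  moreover have "lmax b - lmin b < lmax a - lmin a"
    using assms(7,8) a_nonzero by (simp add: len_eq_lmax_minus_lmin)
  ultimately have low_exponent: "ca - cb - d < d"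
    unfolding d_def by linarith
  have "\<alpha> \<noteq> 0"
    using lmax_coeff_nonzero assms(1,2,7) a_nonzero by (simp add: \<alpha>_def)
  then have "q1 \<noteq> (\<lambda>_. 0)"
    unfolding q1_def using low_exponent by (intro lmonom_pair_nonzero) simp_all
  have sym_q1: "has_symmetry (\<epsilon>a * \<epsilon>b) (ca - cb) q1"
    unfolding q1_def by (rule has_symmetry_lmonom_pair) fact
  note sym_a1 = has_symmetry_remainder[OF assms(5,6) sym_q1 \<open>\<epsilon>b * \<epsilon>b = 1\<close>]
  have "a k - lmult b q1 k = 0" if "lmax a \<le> k" for k
    unfolding q1_def \<alpha>_def d_def
    by (rule lmult_lmonom_pair_cancels_top)
       (use assms(1,2,7) low_exponent that in \<open>simp_all add: d_def\<close>)
  with sym_a1 have "len (\<lambda>k. a k - lmult b q1 k) < ereal (real_of_int (2 * lmax a - ca))"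
    by (rule len_less_if_has_symmetry_vanishes_above)
  also have "\<dots> = len a"
    using a_nonzero centre_a by (simp add: len_eq_lmax_minus_lmin)
  finally show ?thesis
    using laurent_poly_lmonom_pair \<open>q1 \<noteq> (\<lambda>_. 0)\<close> sym_q1 sym_a1
    unfolding Let_def q1_def by blast
qed

end
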